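(* Let $\Gamma$ be a lattice with periodic boundary conditions as below, let $\mathcal{X}$ be an artificial boundary, and let $\mathcal{E}\subseteq C_2(\Gamma)$ be a set of faces with $\mathcal{E}\cap\mathcal{X}=\emptyset$. Suppose $M$ is an $X$-type logical operator equivalent to one of the $\bar X_i$ (i.e. $M\bar X_i$ is an $X$-type stabilizer for some $i$) with $\mathrm{supp}(M)\subseteq\mathcal{E}$. Then $\mathcal{E}\cup\mathcal{X}$ is a cut set of $\Gamma$.
   Context: $\Gamma$ is a finite, connected three-dimensional cell complex without boundary (periodic boundary conditions), with edges $C_1(\Gamma)$, faces $C_2(\Gamma)$, volumes $C_3(\Gamma)$; every face lies in the boundary of exactly two distinct volumes and the dual complex is connected. $\partial(\nu)$ is the set of boundary faces of volume $\nu$ and $\iota(e)$ the set of faces containing edge $e$. The 3D toric code on $\Gamma$ has one qubit per face, stabilizer group generated by $B_e=\prod_{f\in\iota(e)}Z_f$ and $A_\nu=\prod_{f\in\partial(\nu)}X_f$, and encodes $k$ logical qubits; a logical operator is a Pauli operator commuting with all stabilizers but not in the stabilizer group (up to phase); $X_S=\prod_{f\in S}X_f$ and $\mathrm{supp}(P)$ is the set of faces where $P$ acts nontrivially. Fix $X$-type logical operators $\bar X_1,\dots,\bar X_k$, one per logical qubit. An artificial boundary is a set $\mathcal{X}=\bigcup_{i=1}^k\mathrm{supp}(\bar X_i^r)$, where each $\bar X_i^r$ is an $X$-type operator with $\bar X_i^r\bar X_i$ an $X$-type stabilizer, such that $\mathcal{X}$ contains no nonempty set $S$ with $X_S$ a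 stabilizer. A face path is a sequence of faces $\rho=(f_1,\dots,f_m)$ with pairwise distinct volumes $\Lambda(\rho)=(\nu_1,\dots,\nu_{m-1})$, $f_i,f_{i+1}\in\partial(\nu_i)$. A set of faces $K$ is a cut set of $\Gamma$ if there exist volumes $\nu,\nu'$ such that every face path $\rho$ with $f_1\in\partial(\nu)$, $f_m\in\partial(\nu')$ and $\nu,\nu'\notin\Lambda(\rho)$ meets $K$. *)

theory Defs
  imports Main
begin

text \<open>Combinatorial model of the cell complex Gamma: a set Ed of edges, Fa of faces,
Vo of volumes; bd v is the set of boundary faces of volume v, iota e the set of faces
containing edge e.  X-type Pauli operators (up to phase) are identified with their
supports, i.e. sets of faces; multiplication of X-type operators is symmetric difference.\<close>

definition symd :: "'a set \<Rightarrow> 'a set \<Rightarrow> 'a set" where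
  "symd A B = (A - B) \<union> (B - A)"

text \<open>Product over a finite index set, i.e. the mod-2 sum of supports.\<close>
definition sum2 :: "'i set \<Rightarrow> ('i \<Rightarrow> 'a set) \<Rightarrow> 'a set" where
  "sum2 I S = {x. odd (card {i\<in>I. x \<in> S i})}"

definition dual_connected :: "'v set \<Rightarrow> ('v \<Rightarrow> 'f set) \<Rightarrow> bool" where
  "dual_connected Vo bd \<longleftrightarrow>
     (\<forall>v\<in>Vo. \<forall>w\<in>Vo. (v, w) \<in> {(a, b). a \<in> Vo \<and> b \<in> Vo \<and> bd a \<inter> bd b \<noteq> {}}\<^sup>*)"

text \<open>Standing assumptions on Gamma: finite, without boundary (every face lies in the
boundary of exactly two distinct volumes), boundary of boundary is zero (each edge lies
in an even number of faces of each volume, so the stabilizers commute), connected dual.\<close>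
definition periodic_complex ::
  "'e set \<Rightarrow> 'f set \<Rightarrow> 'v set \<Rightarrow> ('v \<Rightarrow> 'f set) \<Rightarrow> ('e \<Rightarrow> 'f set) \<Rightarrow> bool" where
  "periodic_complex Ed Fa Vo bd iota \<longleftrightarrow>
     finite Ed \<and> finite Fa \<and> finite Vo \<and>
     (\<forall>v\<in>Vo. bd v \<subseteq> Fa) \<and> (\<forall>e\<in>Ed. iota e \<subseteq> Fa) \<and>
     (\<forall>f\<in>Fa. card {v\<in>Vo. f \<in> bd v} = 2) \<and>
     (\<forall>e\<in>Ed. \<forall>v\<in>Vo. even (card (iota e \<inter> bd v))) \<and>
     dual_connected Vo bd"

text \<open>X_S is (up to phase) in the stabilizer group iff S is a product of volume stabilizers A_v.\<close>
definition is_x_stabilizer :: "'v set \<Rightarrow> ('v \<Rightarrow> 'f set) \<Rightarrow> 'f set \<Rightarrow> bool" where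
  "is_x_stabilizer Vo bd S \<longleftrightarrow> (\<exists>W\<subseteq>Vo. S = sum2 W bd)"

text \<open>X_S commutes with every B_e (it always commutes with the A_v).\<close>
definition commutes_with_stabilizers :: "'e set \<Rightarrow> ('e \<Rightarrow> 'f set) \<Rightarrow> 'f set \<Rightarrow> bool" where
  "commutes_with_stabilizers Ed iota S \<longleftrightarrow> (\<forall>e\<in>Ed. even (card (S \<inter> iota e)))"

definition x_logical ::
  "'e set \<Rightarrow> 'f set \<Rightarrow> 'v set \<Rightarrow> ('v \<Rightarrow> 'f set) \<Rightarrow> ('e \<Rightarrow> 'f set) \<Rightarrow> 'f set \<Rightarrow> bool" where
  "x_logical Ed Fa Vo bd iota S \<longleftrightarrow>
     S \<subseteq> Fa \<and> commutes_with_stabilizers Ed iota S \<and> \<not> is_x_stabilizer Vo bd S"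

text \<open>Xbar 0, ..., Xbar (k-1): one X-type logical operator per logical qubit, i.e. their
classes form a basis of the X-type logical operators modulo X-type stabilizers.\<close>
definition x_logical_basis ::
  "'e set \<Rightarrow> 'f set \<Rightarrow> 'v set \<Rightarrow> ('v \<Rightarrow> 'f set) \<Rightarrow> ('e \<Rightarrow> 'f set) \<Rightarrow> nat \<Rightarrow> (nat \<Rightarrow> 'f set) \<Rightarrow> bool" where
  "x_logical_basis Ed Fa Vo bd iota k Xbar \<longleftrightarrow>
     (\<forall>i<k. x_logical Ed Fa Vo bd iota (Xbar i)) \<and>
     (\<forall>S\<subseteq>Fa. commutes_with_stabilizers Ed iota S \<longrightarrow>
        (\<exists>!I. I \<subseteq> {..<k} \<and> is_x_stabilizer Vo bd (symd S (sum2 I Xbar))))"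

definition artificial_boundary ::
  "'f set \<Rightarrow> 'v set \<Rightarrow> ('v \<Rightarrow> 'f set) \<Rightarrow> nat \<Rightarrow> (nat \<Rightarrow> 'f set) \<Rightarrow> (nat \<Rightarrow> 'f set) \<Rightarrow> 'f set \<Rightarrow> bool" where
  "artificial_boundary Fa Vo bd k Xbar Xr XX \<longleftrightarrow>
     XX = (\<Union>i<k. Xr i) \<and>
     (\<forall>i<k. Xr i \<subseteq> Fa \<and> is_x_stabilizer Vo bd (symd (Xr i) (Xbar i))) \<and>
     (\<forall>S. S \<subseteq> XX \<and> S \<noteq> {} \<longrightarrow> \<not> is_x_stabilizer Vo bd S)"

definition face_path ::
  "'f set \<Rightarrow> 'v set \<Rightarrow> ('v \<Rightarrow> 'f set) \<Rightarrow> 'f list \<Rightarrow> 'v list \<Rightarrow> bool" where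
  "face_path Fa Vo bd fs vs \<longleftrightarrow>
     fs \<noteq> [] \<and> length vs = length fs - 1 \<and> set fs \<subseteq> Fa \<and> set vs \<subseteq> Vo \<and> distinct vs \<and>
     (\<forall>i<length vs. fs ! i \<in> bd (vs ! i) \<and> fs ! (Suc i) \<in> bd (vs ! i))"

definition cut_set :: "'f set \<Rightarrow> 'v set \<Rightarrow> ('v \<Rightarrow> 'f set) \<Rightarrow> 'f set \<Rightarrow> bool" where
  "cut_set Fa Vo bd K \<longleftrightarrow>
     (\<exists>v\<in>Vo. \<exists>v'\<in>Vo. \<forall>fs vs.
        face_path Fa Vo bd fs vs \<and> hd fs \<in> bd v \<and> last fs \<in> bd v' \<and>
        v \<notin> set vs \<and> v' \<notin> set vs \<longrightarrow> set fs \<inter> K \<noteq> {})"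

end

theory Submission
  imports Defs
begin

text \<open>Multiplying the stabilizers that relate M and Xbar_i^r to Xbar_i shows that the product
of M and Xbar_i^r is a stabilizer, i.e. the mod-2 boundary of a set W of volumes.  This
boundary lies in E \<union> X and contains M, so it is nonempty; hence W is neither empty nor all
volumes (every face bounds exactly two volumes).  A face path starting at a volume of W that
never meets the boundary of W can never leave W, so E \<union> X separates W from its complement.\<close>

lemma even_card_symd_iff:
  assumes "finite A" "finite B"
  shows "even (card (symd A B)) \<longleftrightarrow> (even (card A) \<longleftrightarrow> even (card B))"
proof -
  have "symd A B = (A \<union> B) - (A \<inter> B)" by (auto simp: symd_def)
  moreover have "card (A \<inter> B) \<le> card (A \<union> B)"
    using assms by (intro card_mono) auto
  moreover have "card (A \<union> B - A \<inter> B) = card (A \<union> B) - card (A \<inter> B)"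
    using assms by (intro card_Diff_subset) auto
  ultimately have "card (symd A B) + card (A \<inter> B) = card (A \<union> B)" by simp
  moreover have "card A + card B = card (A \<union> B) + card (A \<inter> B)"
    using assms by (rule card_Un_Int)
  ultimately have "card A + card B = card (symd A B) + 2 * card (A \<inter> B)" by simp
  then show ?thesis by (metis even_add even_mult_iff even_numeral)
qed

lemma sum2_symd:
  assumes "finite I" "finite J"
  shows "sum2 (symd I J) S = symd (sum2 I S) (sum2 J S)"
proof -
  have "x \<in> sum2 (symd I J) S \<longleftrightarrow> (x \<in> sum2 I S \<longleftrightarrow> x \<notin> sum2 J S)" for x
  proof -
    have "{i \<in> symd I J. x \<in> S i} = symd {i \<in> I. x \<in> S i} {i \<in> J. x \<in> S i}"
      by (auto simp: symd_def)
    then show ?thesis using assms by (auto simp: sum2_def even_card_symd_iff)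
  qed
  then show ?thesis by (auto simp: symd_def)
qed

lemma sum2_empty [simp]: "sum2 {} S = {}"
  by (simp add: sum2_def)

lemma is_x_stabilizer_empty: "is_x_stabilizer Vo bd {}"
  unfolding is_x_stabilizer_def by (metis empty_subsetI sum2_empty)

lemma is_x_stabilizer_symd:
  assumes "finite Vo" "is_x_stabilizer Vo bd S" "is_x_stabilizer Vo bd T"
  shows "is_x_stabilizer Vo bd (symd S T)"
proof -
  obtain I J where "I \<subseteq> Vo" "S = sum2 I bd" "J \<subseteq> Vo" "T = sum2 J bd"
    using assms(2,3) unfolding is_x_stabilizer_def by blast
  moreover from this have "symd S T = sum2 (symd I J) bd"
    using assms(1) by (simp add: sum2_symd finite_subset)
  moreover have "symd I J \<subseteq> Vo" using calculation by (auto simp: symd_def)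
  ultimately show ?thesis
    unfolding is_x_stabilizer_def by blast
qed

lemma periodic_complex_finite_volumes:
  "periodic_complex Ed Fa Vo bd iota \<Longrightarrow> finite Vo"
  by (simp add: periodic_complex_def)

lemma sum2_all_volumes:
  assumes "periodic_complex Ed Fa Vo bd iota"
  shows "sum2 Vo bd = {}"
proof -
  have "even (card {v \<in> Vo. f \<in> bd v})" for f
  proof (cases "f \<in> Fa")
    case True
    with assms show ?thesis by (auto simp: periodic_complex_def)
  next
    case False
    then have "{v \<in> Vo. f \<in> bd v} = {}" using assms by (auto simp: periodic_complex_def)
    then show ?thesis by (metis card.empty even_zero)
  qed
  then show ?thesis by (simp add: sum2_def)
qed

text \<open>The volumes of W containing such a face are nonempty and even in number, so they are
both volumes containing it.\<close>

lemma cofaces_in_region_if_notin_sum2: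
  assumes pc: "periodic_complex Ed Fa Vo bd iota" and W: "W \<subseteq> Vo"
    and f: "f \<notin> sum2 W bd" "u \<in> W" "f \<in> bd u"
    and u': "u' \<in> Vo" "f \<in> bd u'"
  shows "u' \<in> W"
proof -
  let ?cofaces = "{v \<in> Vo. f \<in> bd v}" and ?in_W = "{v \<in> W. f \<in> bd v}"
  have "f \<in> Fa" using pc W f(2,3) by (auto simp: periodic_complex_def)
  then have two: "card ?cofaces = 2" using pc by (simp add: periodic_complex_def)
  then have fin: "finite ?cofaces" by (intro card_ge_0_finite) simp
  have sub: "?in_W \<subseteq> ?cofaces" using W by auto
  have "?in_W \<noteq> {}" using f(2,3) by auto
  then have "card ?in_W \<noteq> 0" using finite_subset[OF sub fin] by simp
  moreover have "even (card ?in_W)" using f(1) by (simp add: sum2_def)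
  moreover have "card ?in_W \<le> 2" using card_mono[OF fin sub] two by simp
  ultimately have "card ?in_W = card ?cofaces" unfolding two by presburger
  then have "?in_W = ?cofaces" by (rule card_subset_eq[OF fin sub])
  then show ?thesis using u' by blast
qed

lemma face_path_stays_in_region:
  assumes pc: "periodic_complex Ed Fa Vo bd iota" and W: "W \<subseteq> Vo"
    and path: "face_path Fa Vo bd fs vs" and avoid: "set fs \<inter> sum2 W bd = {}"
    and start: "v \<in> W" "hd fs \<in> bd v"
    and stop: "v' \<in> Vo" "last fs \<in> bd v'"
  shows "v' \<in> W"
proof -
  have fs: "fs \<noteq> []" "length vs = length fs - 1" "set vs \<subseteq> Vo"
    and steps: "\<And>j. j < length vs \<Longrightarrow> fs ! j \<in> bd (vs ! j) \<and> fs ! Suc j \<in> bd (vs ! j)"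
    using path unfolding face_path_def by auto
  have notin: "fs ! j \<notin> sum2 W bd" if "j < length fs" for j
    using avoid that nth_mem by blast
  have "\<forall>u \<in> Vo. fs ! j \<in> bd u \<longrightarrow> u \<in> W" if "j < length fs" for j
    using that
  proof (induction j)
    case 0
    have "fs ! 0 \<in> bd v" using start(2) fs(1) by (simp add: hd_conv_nth)
    then show ?case using cofaces_in_region_if_notin_sum2[OF pc W notin[OF 0] start(1)] by blast
  next
    case (Suc j)
    then have j: "j < length vs" using fs(2) by simp
    have "vs ! j \<in> Vo" using j fs(3) nth_mem by blast
    then have "vs ! j \<in> W" using Suc steps[OF j] by simp
    then show ?case
      using cofaces_in_region_if_notin_sum2[OF pc W notin[OF Suc.prems]] steps[OF j] by blast
  qed
  moreover have "last fs = fs ! (length fs - 1)" "length fs - 1 < length fs"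
    using fs(1) by (simp_all add: last_conv_nth)
  ultimately show ?thesis using stop by simp
qed

lemma cut_set_if_nonempty_x_stabilizer:
  assumes pc: "periodic_complex Ed Fa Vo bd iota"
    and "is_x_stabilizer Vo bd S" "S \<noteq> {}" "S \<subseteq> K"
  shows "cut_set Fa Vo bd K"
proof -
  obtain W where W: "W \<subseteq> Vo" "S = sum2 W bd"
    using assms(2) unfolding is_x_stabilizer_def by blast
  obtain v where v: "v \<in> W" using W(2) \<open>S \<noteq> {}\<close> by fastforce
  have "W \<noteq> Vo" using W(2) \<open>S \<noteq> {}\<close> sum2_all_volumes[OF pc] by auto
  then obtain v' where v': "v' \<in> Vo" "v' \<notin> W" using W(1) by blast
  have "set fs \<inter> K \<noteq> {}"
    if "face_path Fa Vo bd fs vs" "hd fs \<in> bd v" "last fs \<in> bd v'" for fs vs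
    using face_path_stays_in_region[OF pc W(1) that(1) _ v that(2) v'(1) that(3)]
      v'(2) W(2) \<open>S \<subseteq> K\<close> by blast
  then show ?thesis
    unfolding cut_set_def using v W(1) v'(1) by blast
qed

theorem lemma10:
  fixes Ed :: "'e set" and Fa :: "'f set" and Vo :: "'v set"
    and bd :: "'v \<Rightarrow> 'f set" and iota :: "'e \<Rightarrow> 'f set"
    and k :: nat and Xbar Xr :: "nat \<Rightarrow> 'f set" and XX EE M :: "'f set"
  assumes "periodic_complex Ed Fa Vo bd iota"
    and "x_logical_basis Ed Fa Vo bd iota k Xbar"
    and "artificial_boundary Fa Vo bd k Xbar Xr XX"
    and "EE \<subseteq> Fa" and "EE \<inter> XX = {}"
    and "x_logical Ed Fa Vo bd iota M"
    and "\<exists>i<k. is_x_stabilizer Vo bd (symd M (Xbar i))"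
    and "M \<subseteq> EE"
  shows "cut_set Fa Vo bd (EE \<union> XX)"
proof -
  obtain i where i: "i < k" "is_x_stabilizer Vo bd (symd M (Xbar i))"
    using assms(7) by blast
  have Xr: "Xr i \<subseteq> XX" "is_x_stabilizer Vo bd (symd (Xr i) (Xbar i))"
    using assms(3) i(1) unfolding artificial_boundary_def by auto
  have "is_x_stabilizer Vo bd (symd (symd M (Xbar i)) (symd (Xr i) (Xbar i)))"
    using is_x_stabilizer_symd[OF periodic_complex_finite_volumes[OF assms(1)] i(2) Xr(2)] .
  moreover have "symd (symd M (Xbar i)) (symd (Xr i) (Xbar i)) = symd M (Xr i)"
    by (auto simp: symd_def)
  ultimately have stab: "is_x_stabilizer Vo bd (symd M (Xr i))" by simp
  have "M \<noteq> {}"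
    using assms(6) is_x_stabilizer_empty unfolding x_logical_def by blast
  moreover have "M \<subseteq> symd M (Xr i)"
    using Xr(1) assms(5,8) by (auto simp: symd_def)
  moreover have "symd M (Xr i) \<subseteq> EE \<union> XX"
    using Xr(1) assms(8) by (auto simp: symd_def)
  ultimately show ?thesis
    using cut_set_if_nonempty_x_stabilizer[OF assms(1) stab] by blast
qed

end
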